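(* Let $\Psi\vdash\sigma:\Gamma\Rightarrow\Delta$ and $\Psi\vdash\tau:\Delta\Rightarrow\Sigma$ be derivable in $TT_{Sig}$. Suppose $(A:\Sigma)\in\Psi$ and $(y:A\,\tau)\in\Delta$. Then $([\![\sigma]\!](y):A\,(\sigma\cdot\tau))\in\Gamma$.
   Context: **Syntax of $TT_{Sig}$.** - Signatures: $\Psi::=\bullet\mid\Psi,A:\Gamma$. - Contexts: $\Gamma::=\bullet\mid\Gamma,x:X$. - Substitutions: $\sigma::=\epsilon\mid(\sigma,z)$. - Sorts: $X::=A\,\sigma$. - Here $A$ ranges over sort names and $x,z$ over variables. - $(A:\Delta)\in\Psi$ and $(x:X)\in\Gamma$ denote membership in the list. **Rules.** - From $\Psi;\Gamma\vdash$, $\Psi;\Gamma\vdash X$ and $x$ not already bound in $\Gamma$, infer $\Psi;\Gamma,x:X\vdash$; also $\Psi;\bullet\vdash$. - (Substitutions) $\Psi\vdash\epsilon:\Gamma\Rightarrow\bullet$; and from $\Psi\vdash\sigma:\Gamma\Rightarrow\Delta$ and $\Psi;\Gamma\vdash z:\sigma(X)$, infer $\Psi\vdash(\sigma,z):\Gamma\Rightarrow\Delta,x:X$. - (Variables) From $(x:X)\in\Gamma$ and $\Psi;\Gamma\vdash$, infer $\Psi;\Gamma\vdash x:X$. - (Sorts) From $(A:\Delta)\in\Psi$ and $\Psi\vdash\sigma:\Gamma\Rightarrow\Delta$, infer $\Psi;\Gamma\vdash A\,\sigma$. **Auxiliary definitions.** - $|\bullet|=\varnothing$ and $|\Gamma,x:X|=|\Gamma|\amalg\{x\}$.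 - For well-formed $\sigma:\Gamma\Rightarrow\Delta$, define $[\![\sigma]\!]:|\Delta|\to|\Gamma|$ by: $[\![\epsilon]\!]$ is empty, and $[\![\sigma,z]\!]$ sends $y\in|\Delta|$ to $[\![\sigma]\!](y)$ and the last variable $x$ to $z$. - The composite is defined by $\sigma\cdot\epsilon=\epsilon$ and $\sigma\cdot(\tau,z)=(\sigma\cdot\tau,[\![\sigma]\!](z))$. - The action on sorts is $\sigma(A\,\tau)=A\,(\sigma\cdot\tau)$. *)

theory Defs
  imports Main
begin

datatype 'v subst = Eps | SExt "'v subst" 'v

datatype ('a, 'v) srt = Srt 'a "'v subst"

datatype ('a, 'v) ctx = CEmp | CExt "('a, 'v) ctx" 'v "('a, 'v) srt"

datatype ('a, 'v) sig = SigEmp | SigExt "('a, 'v) sig" 'a "('a, 'v) ctx"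

fun in_ctx :: "'v \<Rightarrow> ('a, 'v) srt \<Rightarrow> ('a, 'v) ctx \<Rightarrow> bool" where
  "in_ctx x X CEmp = False"
| "in_ctx x X (CExt G y Y) = ((x = y \<and> X = Y) \<or> in_ctx x X G)"

fun in_sig :: "'a \<Rightarrow> ('a, 'v) ctx \<Rightarrow> ('a, 'v) sig \<Rightarrow> bool" where
  "in_sig A D SigEmp = False"
| "in_sig A D (SigExt P B E) = ((A = B \<and> D = E) \<or> in_sig A D P)"

fun dom :: "('a, 'v) ctx \<Rightarrow> 'v set" where
  "dom CEmp = {}"
| "dom (CExt G x X) = insert x (dom G)"

fun distinct_ctx :: "('a, 'v) ctx \<Rightarrow> bool" where
  "distinct_ctx CEmp = True"
| "distinct_ctx (CExt G x X) = (x \<notin> dom G \<and> distinct_ctx G)"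

text \<open>[[sigma]] : |Delta| -> |Gamma| (depends on the codomain context Delta).\<close>

fun interp :: "'v subst \<Rightarrow> ('a, 'v) ctx \<Rightarrow> 'v \<Rightarrow> 'v" where
  "interp (SExt s z) (CExt D x X) y = (if y = x then z else interp s D y)"
| "interp _ _ y = undefined"

text \<open>Composite sigma . tau, where sigma : Gamma => Delta.\<close>

fun comp :: "'v subst \<Rightarrow> ('a, 'v) ctx \<Rightarrow> 'v subst \<Rightarrow> 'v subst" where
  "comp s D Eps = Eps"
| "comp s D (SExt t z) = SExt (comp s D t) (interp s D z)"

fun act :: "'v subst \<Rightarrow> ('a, 'v) ctx \<Rightarrow> ('a, 'v) srt \<Rightarrow> ('a, 'v) srt" where
  "act s D (Srt A t) = Srt A (comp s D t)"

text \<open>Judgments: Psi;Gamma |- ; Psi |- sigma : Gamma => Delta; Psi;Gamma |- x : X; Psi;Gamma |- X.\<close>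

inductive wf_ctx :: "('a, 'v) sig \<Rightarrow> ('a, 'v) ctx \<Rightarrow> bool"
  and wf_subst :: "('a, 'v) sig \<Rightarrow> 'v subst \<Rightarrow> ('a, 'v) ctx \<Rightarrow> ('a, 'v) ctx \<Rightarrow> bool"
  and has_var :: "('a, 'v) sig \<Rightarrow> ('a, 'v) ctx \<Rightarrow> 'v \<Rightarrow> ('a, 'v) srt \<Rightarrow> bool"
  and wf_sort :: "('a, 'v) sig \<Rightarrow> ('a, 'v) ctx \<Rightarrow> ('a, 'v) srt \<Rightarrow> bool"
where
  ctx_emp: "wf_ctx P CEmp"
| ctx_ext: "wf_ctx P G \<Longrightarrow> wf_sort P G X \<Longrightarrow> x \<notin> dom G \<Longrightarrow> wf_ctx P (CExt G x X)"
| subst_emp: "wf_subst P Eps G CEmp"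
| subst_ext: "wf_subst P s G D \<Longrightarrow> has_var P G z (act s D X)
              \<Longrightarrow> wf_subst P (SExt s z) G (CExt D x X)"
| var: "in_ctx x X G \<Longrightarrow> wf_ctx P G \<Longrightarrow> has_var P G x X"
| sort: "in_sig A D P \<Longrightarrow> wf_subst P s G D \<Longrightarrow> wf_sort P G (Srt A s)"

end

theory Submission
  imports Defs
begin

text \<open>Induction on \<open>\<Delta>\<close>, peeling \<open>\<sigma> = (\<sigma>', z)\<close> off \<open>\<sigma> : \<Gamma> \<Rightarrow> \<Delta>, x : X\<close>.
  If \<open>y = x\<close> then \<open>X = A \<tau>\<close> and the typing premise of \<open>z\<close> is exactly
  \<open>(z : A (\<sigma>' \<cdot> \<tau>)) \<in> \<Gamma>\<close>; otherwise the induction hypothesis applies. In both cases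
  \<open>\<sigma> \<cdot> \<tau> = \<sigma>' \<cdot> \<tau>\<close>, because \<open>\<tau>\<close> only mentions variables bound before \<open>x\<close> in a
  well-formed \<open>\<Delta>\<close>, and \<open>x\<close> is fresh for them. Well-formedness of \<open>\<Delta>\<close> follows from
  \<open>\<tau> : \<Delta> \<Rightarrow> \<Sigma>\<close> unless \<open>\<Sigma>\<close> is empty; then \<open>\<tau> = \<epsilon>\<close>, composition is trivial, and
  distinctness of \<open>\<Delta>\<close> suffices.\<close>

fun svars :: "'v subst \<Rightarrow> 'v set" where
  "svars Eps = {}"
| "svars (SExt s z) = insert z (svars s)"

lemma in_ctx_dom: "in_ctx x X G \<Longrightarrow> x \<in> dom G"
  by (induction G) auto

lemma in_ctx_CExt_same:
  "in_ctx x Y (CExt D x X) \<Longrightarrow> x \<notin> dom D \<Longrightarrow> Y = X"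
  using in_ctx_dom by fastforce

lemma has_var_in_ctx: "has_var P G x X \<Longrightarrow> in_ctx x X G"
  by (auto elim: has_var.cases)

lemma wf_subst_svars: "wf_subst P s G D \<Longrightarrow> svars s \<subseteq> dom G"
proof -
  have "(wf_ctx P G \<longrightarrow> True) \<and>
        (wf_subst P s G D \<longrightarrow> svars s \<subseteq> dom G) \<and>
        (has_var P G x X \<longrightarrow> x \<in> dom G) \<and>
        (wf_sort P G Y \<longrightarrow> True)" for P G s D x X Y
    by (induction rule: wf_ctx_wf_subst_has_var_wf_sort.induct) (auto dest: in_ctx_dom)
  then show "wf_subst P s G D \<Longrightarrow> svars s \<subseteq> dom G" by fast
qed

lemma wf_sort_svars: "wf_sort P G (Srt A t) \<Longrightarrow> svars t \<subseteq> dom G"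
  by (auto elim: wf_sort.cases dest: wf_subst_svars)

lemma wf_ctx_CExtD:
  "wf_ctx P (CExt D x X) \<Longrightarrow> wf_ctx P D \<and> wf_sort P D X \<and> x \<notin> dom D"
  by (auto elim: wf_ctx.cases)

lemma in_wf_ctx_svars: "wf_ctx P D \<Longrightarrow> in_ctx y (Srt A t) D \<Longrightarrow> svars t \<subseteq> dom D"
proof (induction D)
  case CEmp
  then show ?case by simp
next
  case (CExt D x X)
  then show ?case
    using wf_ctx_CExtD[OF CExt.prems(1)] wf_sort_svars[of P D] by auto
qed

lemma comp_SExt_fresh:
  "svars t \<subseteq> dom D \<Longrightarrow> x \<notin> dom D \<Longrightarrow> comp (SExt s z) (CExt D x X) t = comp s D t"
  by (induction t) auto

lemma wf_subst_CExtE: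
  assumes "wf_subst P s G (CExt D x X)"
  obtains s' z where "s = SExt s' z" "wf_subst P s' G D" "in_ctx z (act s' D X) G"
  using assms by (cases rule: wf_subst.cases) (auto dest: has_var_in_ctx)

lemma wf_subst_wf_ctx: "wf_subst P t D S \<Longrightarrow> S \<noteq> CEmp \<Longrightarrow> wf_ctx P D"
  by (auto elim!: wf_subst.cases has_var.cases)

lemma interp_in_ctx_wf:
  "wf_subst P s G D \<Longrightarrow> wf_ctx P D \<Longrightarrow> in_ctx y (Srt A t) D \<Longrightarrow>
   in_ctx (interp s D y) (Srt A (comp s D t)) G"
proof (induction D arbitrary: s y)
  case CEmp
  then show ?case by simp
next
  case (CExt D x X)
  obtain s' z where s: "s = SExt s' z" "wf_subst P s' G D" "in_ctx z (act s' D X) G"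
    using CExt.prems(1) by (rule wf_subst_CExtE)
  have D: "wf_ctx P D" "wf_sort P D X" "x \<notin> dom D"
    using wf_ctx_CExtD[OF CExt.prems(2)] by auto
  show ?case
  proof (cases "y = x")
    case True
    then have "Srt A t = X" using CExt.prems(3) in_ctx_CExt_same[OF _ D(3)] by simp
    then show ?thesis
      using s True comp_SExt_fresh[OF wf_sort_svars D(3)] D(2) by force
  next
    case False
    then have y: "in_ctx y (Srt A t) D" using CExt.prems(3) by simp
    show ?thesis
      using CExt.IH[OF s(2) D(1) y] s False comp_SExt_fresh[OF in_wf_ctx_svars[OF D(1) y] D(3)]
      by simp
  qed
qed

lemma interp_in_ctx_Eps:
  "wf_subst P s G D \<Longrightarrow> distinct_ctx D \<Longrightarrow> in_ctx y (Srt A Eps) D \<Longrightarrow>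
   in_ctx (interp s D y) (Srt A Eps) G"
proof (induction D arbitrary: s y)
  case CEmp
  then show ?case by simp
next
  case (CExt D x X)
  obtain s' z where s: "s = SExt s' z" "wf_subst P s' G D" "in_ctx z (act s' D X) G"
    using CExt.prems(1) by (rule wf_subst_CExtE)
  show ?case
  proof (cases "y = x")
    case True
    then have "Srt A Eps = X" using CExt.prems(2,3) in_ctx_CExt_same[of x _ D X] by simp
    then show ?thesis using s True by auto
  next
    case False
    then show ?thesis using CExt s by auto
  qed
qed

theorem mainTheorem3:
  fixes P :: "('a, 'v) sig" and G D S :: "('a, 'v) ctx"
    and s t :: "'v subst" and A :: 'a and y :: 'v
  assumes "wf_subst P s G D"
    and "wf_subst P t D S"
    and "distinct_ctx D"
    and "in_sig A S P"
    and "in_ctx y (Srt A t) D"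
  shows "in_ctx (interp s D y) (Srt A (comp s D t)) G"
proof (cases "S = CEmp")
  case False
  then show ?thesis
    using interp_in_ctx_wf[OF assms(1) wf_subst_wf_ctx[OF assms(2)] assms(5)] by blast
next
  case True
  then have "t = Eps" using assms(2) by (auto elim: wf_subst.cases)
  then show ?thesis using interp_in_ctx_Eps assms(1,3,5) by simp
qed

end
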